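(* Let $d\geq3$ and let $T$ be a set of three affinely independent points in $\mathbb{N}_0^d$. Then the $2$-completion $E_2^\infty(T)$ of $T$ equals $\Lambda(T)\cap\mathbb{N}_0^d$.
   Context: $\mathbb{N}_0=\{0,1,2,\dots\}$. For nonempty $\Gamma\subseteq\mathbb{N}_0^d$, $\Lambda(\Gamma)$ is the coset in $\mathbb{Z}^d$ generated by $\Gamma$ (smallest coset of a subgroup of $\mathbb{Z}^d$ containing $\Gamma$); each $\lambda\in\Lambda(\Gamma)$ can be written $\lambda=\gamma+\sum_{\alpha\in\Gamma,\alpha\neq\gamma}m_{\gamma,\alpha}(\alpha-\gamma)$ with $\gamma\in\Gamma$ and integers $m_{\gamma,\alpha}$, finitely many nonzero. $d(\Gamma,\lambda)$ is the infimum over all such representations of $\max\big(\sum_{m_{\gamma,\alpha}>0}m_{\gamma,\alpha},-\sum_{m_{\gamma,\alpha}<0}m_{\gamma,\alpha}\big)$, and $E_n(\Gamma)=\{\lambda\in\Lambda(\Gamma)\cap\mathbb{N}_0^d:d(\Gamma,\lambda)\leq n\}$. Set $E_n^1(T)=E_n(T)$, $E_n^{k+1}(T)=E_n(E_n^k(T))$, and the $n$-completion $E_n^\infty(T)=\bigcup_{k\geq1}E_n^k(T)$. *)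

theory Defs
  imports "HOL-Analysis.Analysis"
begin

text \<open>Points of Z^d are vectors of type int ^ 'n, with d = CARD('n).\<close>

definition nonneg_pts :: "(int ^ 'n) set" where
  "nonneg_pts = {x. \<forall>i. x $ i \<ge> 0}"

definition is_rep :: "(int ^ 'n) set \<Rightarrow> int ^ 'n \<Rightarrow> int ^ 'n \<Rightarrow> (int ^ 'n \<Rightarrow> int) \<Rightarrow> bool" where
  "is_rep G lam gam m \<longleftrightarrow> gam \<in> G \<and> finite {a. m a \<noteq> 0} \<and> {a. m a \<noteq> 0} \<subseteq> G - {gam} \<and>
     lam = gam + (\<Sum>a\<in>{a. m a \<noteq> 0}. of_int (m a) * (a - gam))"

definition Lambda :: "(int ^ 'n) set \<Rightarrow> (int ^ 'n) set" where
  "Lambda G = {lam. \<exists>gam m. is_rep G lam gam m}"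

definition rep_cost :: "(int ^ 'n \<Rightarrow> int) \<Rightarrow> nat" where
  "rep_cost m = max (\<Sum>a\<in>{a. m a \<noteq> 0}. nat (m a)) (\<Sum>a\<in>{a. m a \<noteq> 0}. nat (- m a))"

definition gdist :: "(int ^ 'n) set \<Rightarrow> int ^ 'n \<Rightarrow> nat" where
  "gdist G lam = Inf {rep_cost m | gam m. is_rep G lam gam m}"

definition E :: "nat \<Rightarrow> (int ^ 'n) set \<Rightarrow> (int ^ 'n) set" where
  "E n G = {lam \<in> Lambda G \<inter> nonneg_pts. gdist G lam \<le> n}"

definition E_completion :: "nat \<Rightarrow> (int ^ 'n) set \<Rightarrow> (int ^ 'n) set" where
  "E_completion n T = (\<Union>k\<in>{1..}. (E n ^^ k) T)"

definition to_real_vec :: "int ^ 'n \<Rightarrow> real ^ 'n" where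
  "to_real_vec x = (\<chi> i. real_of_int (x $ i))"

end

theory Submission
  imports Defs
begin

text \<open>Write T = {A, B, C}. Then Lambda T is the set of integer affine
  combinations aA + bB + cC with a + b + c = 1, and every E_n-step stays inside it.
  Conversely, let x = aA + bB + cC be nonnegative with A, B, C in the completion K. If
  a, b, c \<ge> 0 then x is one of A, B, C. Otherwise, up to symmetry, b \<ge> 1 and a or c is
  negative, and one point of the triple is replaced by D = B + C - A, D = 2B - A or
  D = 3B - A - C, according as c \<ge> 1, a < c \<le> 0 or a = c < 0. D is a step of cost 2 from the
  old triple, and a positive multiple of D is x plus a nonnegative combination of B and C, so
  D lies in K. Over the new independent triple, x has smaller weight |a| + |b| + |c|, and
  induction on the weight concludes. The argument works for every n \<ge> 2 and does not need
  d \<ge> 3.\<close>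

lemma of_int_vec_nth [simp]: "(of_int k :: 'a::ring_1 ^ 'n) $ i = of_int k"
  by (cases k) (simp_all add: of_nat_index)

section \<open>Integer affine combinations of three points\<close>

definition comb3 :: "int \<Rightarrow> int \<Rightarrow> int \<Rightarrow> int ^ 'n \<Rightarrow> int ^ 'n \<Rightarrow> int ^ 'n \<Rightarrow> int ^ 'n" where
  "comb3 a b c A B C = of_int a * A + of_int b * B + of_int c * C"

lemma comb3_nth: "comb3 a b c A B C $ i = a * A $ i + b * B $ i + c * C $ i"
  by (simp add: comb3_def)

lemma comb3_swap12: "comb3 a b c A B C = comb3 b a c B A C"
  and comb3_swap13: "comb3 a b c A B C = comb3 c b a C B A"
  and comb3_swap23: "comb3 a b c A B C = comb3 a c b A C B"
  by (simp_all add: comb3_def algebra_simps)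

lemma comb3_eq_base_plus:
  assumes "a + b + c = 1"
  shows "comb3 a b c A B C = A + of_int b * (B - A) + of_int c * (C - A)"
proof -
  have a: "a = 1 - b - c" using assms by simp
  show ?thesis unfolding vec_eq_iff comb3_nth a by (simp add: algebra_simps)
qed

lemma comb3_replace_first:
  "comb3 a b c A B C = comb3 (- a) (b + a * q) (c + a * r) (comb3 (- 1) q r A B C) B C"
  by (simp add: comb3_def algebra_simps)

lemma comb3_plus_scaled_diff:
  "comb3 a b c A B C + of_int k * (comb3 a' b' c' A B C - comb3 a'' b'' c'' A B C)
     = comb3 (a + k * (a' - a'')) (b + k * (b' - b'')) (c + k * (c' - c'')) A B C"
  by (simp add: comb3_def algebra_simps)

definition int_affine_indep3 :: "int ^ 'n \<Rightarrow> int ^ 'n \<Rightarrow> int ^ 'n \<Rightarrow> bool" where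
  "int_affine_indep3 A B C \<longleftrightarrow>
     (\<forall>a b c. a + b + c = 0 \<longrightarrow> comb3 a b c A B C = 0 \<longrightarrow> a = 0 \<and> b = 0 \<and> c = 0)"

lemma int_affine_indep3D:
  "int_affine_indep3 A B C \<Longrightarrow> a + b + c = 0 \<Longrightarrow> comb3 a b c A B C = 0 \<Longrightarrow> a = 0 \<and> b = 0 \<and> c = 0"
  unfolding int_affine_indep3_def by blast

lemma int_affine_indep3_swap12: "int_affine_indep3 A B C \<Longrightarrow> int_affine_indep3 B A C"
  and int_affine_indep3_swap13: "int_affine_indep3 A B C \<Longrightarrow> int_affine_indep3 C B A"
  and int_affine_indep3_swap23: "int_affine_indep3 A B C \<Longrightarrow> int_affine_indep3 A C B"
  unfolding int_affine_indep3_def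
  by (metis comb3_swap12 add.commute, metis comb3_swap13 add.commute add.assoc,
      metis comb3_swap23 add.commute add.assoc)

lemma int_affine_indep3_distinct:
  assumes "int_affine_indep3 A B C"
  shows "A \<noteq> B" "A \<noteq> C" "B \<noteq> C"
proof -
  have "comb3 1 (- 1) 0 A A C = 0" "comb3 1 0 (- 1) A B A = 0" "comb3 0 1 (- 1) A B B = 0"
    by (simp_all add: comb3_def)
  then show "A \<noteq> B" "A \<noteq> C" "B \<noteq> C"
    using int_affine_indep3D[OF assms, of 1 "- 1" 0] int_affine_indep3D[OF assms, of 1 0 "- 1"]
      int_affine_indep3D[OF assms, of 0 1 "- 1"]
    by auto
qed

lemma int_affine_indep3_replace_first:
  assumes "int_affine_indep3 A B C" "q + r = 2"
  shows "int_affine_indep3 (comb3 (- 1) q r A B C) B C"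
  unfolding int_affine_indep3_def
proof (intro allI impI)
  fix a b c :: int
  assume "a + b + c = 0" "comb3 a b c (comb3 (- 1) q r A B C) B C = 0"
  moreover have "comb3 a b c (comb3 (- 1) q r A B C) B C = comb3 (- a) (b + a * q) (c + a * r) A B C"
    by (simp add: comb3_def algebra_simps)
  moreover have "- a + (b + a * q) + (c + a * r) = a + b + c"
    using assms(2) by (simp add: algebra_simps flip: distrib_left)
  ultimately have "- a = 0 \<and> b + a * q = 0 \<and> c + a * r = 0"
    using int_affine_indep3D[OF assms(1)] by metis
  then show "a = 0 \<and> b = 0 \<and> c = 0" by auto
qed

lemma int_affine_indep3_if_not_affine_dependent:
  assumes "\<not> affine_dependent (to_real_vec ` {A, B, C})" "A \<noteq> B" "A \<noteq> C" "B \<noteq> C"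
  shows "int_affine_indep3 A B C"
  unfolding int_affine_indep3_def
proof (intro allI impI)
  fix a b c :: int
  assume sum: "a + b + c = 0" and comb: "comb3 a b c A B C = 0"
  let ?A = "to_real_vec A" and ?B = "to_real_vec B" and ?C = "to_real_vec C"
  have inj: "inj to_real_vec"
    by (rule injI) (simp add: to_real_vec_def vec_eq_iff)
  then have distinct: "?A \<noteq> ?B" "?A \<noteq> ?C" "?B \<noteq> ?C"
    using assms(2-4) by (auto dest: injD)
  define u where "u v = (if v = ?A then real_of_int a else if v = ?B then real_of_int b else real_of_int c)" for v
  have "sum u {?A, ?B, ?C} = 0"
    using distinct sum unfolding u_def by simp
  moreover have "(\<Sum>v\<in>{?A, ?B, ?C}. u v *\<^sub>R v) = 0"
  proof -
    have "(\<Sum>v\<in>{?A, ?B, ?C}. u v *\<^sub>R v) = real_of_int a *\<^sub>R ?A + real_of_int b *\<^sub>R ?B + real_of_int c *\<^sub>R ?C"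
      using distinct unfolding u_def by (simp add: algebra_simps)
    also have "\<dots> = to_real_vec (comb3 a b c A B C)"
      by (simp add: to_real_vec_def comb3_nth vec_eq_iff)
    finally show ?thesis
      using comb by (simp add: to_real_vec_def vec_eq_iff)
  qed
  ultimately have "\<forall>v\<in>{?A, ?B, ?C}. u v = 0"
    using assms(1) affine_dependent_explicit_finite[of "{?A, ?B, ?C}"] by auto
  then show "a = 0 \<and> b = 0 \<and> c = 0"
    using distinct unfolding u_def by auto
qed

section \<open>The lattice generated by three points\<close>

definition affine_lattice3 :: "int ^ 'n \<Rightarrow> int ^ 'n \<Rightarrow> int ^ 'n \<Rightarrow> (int ^ 'n) set" where
  "affine_lattice3 A B C = {comb3 a b c A B C | a b c. a + b + c = 1}"

lemma affine_lattice3_plus_scaled_diff: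
  assumes "y \<in> affine_lattice3 A B C" "u \<in> affine_lattice3 A B C" "g \<in> affine_lattice3 A B C"
  shows "y + of_int k * (u - g) \<in> affine_lattice3 A B C"
proof -
  obtain a b c a' b' c' a'' b'' c'' where
    "y = comb3 a b c A B C" "u = comb3 a' b' c' A B C" "g = comb3 a'' b'' c'' A B C" and
    sums: "a + b + c = 1" "a' + b' + c' = 1" "a'' + b'' + c'' = 1"
    using assms unfolding affine_lattice3_def by blast
  then have "y + of_int k * (u - g)
      = comb3 (a + k * (a' - a'')) (b + k * (b' - b'')) (c + k * (c' - c'')) A B C"
    by (simp add: comb3_plus_scaled_diff)
  moreover have "(a + k * (a' - a'')) + (b + k * (b' - b'')) + (c + k * (c' - c''))
      = (a + b + c) + k * ((a' + b' + c') - (a'' + b'' + c''))"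
    by (simp add: algebra_simps)
  ultimately show ?thesis
    unfolding affine_lattice3_def using sums by auto
qed

lemma Lambda_subset_affine_lattice3:
  assumes "G \<subseteq> affine_lattice3 A B C"
  shows "Lambda G \<subseteq> affine_lattice3 A B C"
proof
  fix x assume "x \<in> Lambda G"
  then obtain g m where rep: "is_rep G x g m"
    unfolding Lambda_def by auto
  then have g: "g \<in> affine_lattice3 A B C"
    using assms unfolding is_rep_def by auto
  have "g + (\<Sum>a\<in>F. of_int (m a) * (a - g)) \<in> affine_lattice3 A B C" if "finite F" "F \<subseteq> G" for F
    using that
  proof (induction F rule: finite_induct)
    case empty
    then show ?case using g by simp
  next
    case (insert u F)
    then have "g + (\<Sum>a\<in>F. of_int (m a) * (a - g)) + of_int (m u) * (u - g) \<in> affine_lattice3 A B C"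
      using assms g by (intro affine_lattice3_plus_scaled_diff) auto
    then show ?case
      using insert(1,2) by (simp add: add_ac)
  qed
  then show "x \<in> affine_lattice3 A B C"
    using rep unfolding is_rep_def by auto
qed

lemma gdist_le_rep_cost: "is_rep G x g m \<Longrightarrow> gdist G x \<le> rep_cost m"
  unfolding gdist_def by (rule cInf_lower) auto

lemma two_point_rep:
  assumes "g \<in> G" "P \<in> G" "Q \<in> G" "P \<noteq> g" "Q \<noteq> g" "P \<noteq> Q"
  shows Lambda_two_point: "g + of_int i * (P - g) + of_int j * (Q - g) \<in> Lambda G"
    and gdist_two_point: "gdist G (g + of_int i * (P - g) + of_int j * (Q - g))
                            \<le> max (nat i + nat j) (nat (- i) + nat (- j))"
proof -
  define m where "m z = (if z = P then i else if z = Q then j else 0)" for z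
  have supp: "{a. m a \<noteq> 0} \<subseteq> {P, Q}"
    by (auto simp: m_def split: if_splits)
  have sum_supp: "sum f {a. m a \<noteq> 0} = f P + f Q" if "\<And>a. m a = 0 \<Longrightarrow> f a = 0"
    for f :: "_ \<Rightarrow> 'b::comm_monoid_add"
  proof -
    have "sum f {a. m a \<noteq> 0} = sum f {P, Q}"
      by (rule sum.mono_neutral_left) (use supp that in auto)
    then show ?thesis using assms(6) by simp
  qed
  have m: "m P = i" "m Q = j"
    using assms(6) by (simp_all add: m_def)
  have "(\<Sum>a\<in>{a. m a \<noteq> 0}. of_int (m a) * (a - g)) = of_int i * (P - g) + of_int j * (Q - g)"
    by (subst sum_supp) (simp_all add: m)
  then have rep: "is_rep G (g + of_int i * (P - g) + of_int j * (Q - g)) g m"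
    unfolding is_rep_def using assms(1-5) supp finite_subset[OF supp] by (auto simp: add.assoc)
  then show "g + of_int i * (P - g) + of_int j * (Q - g) \<in> Lambda G"
    unfolding Lambda_def by blast
  have "rep_cost m = max (nat i + nat j) (nat (- i) + nat (- j))"
    unfolding rep_cost_def by (subst (1 2) sum_supp) (simp_all add: m)
  then show "gdist G (g + of_int i * (P - g) + of_int j * (Q - g))
               \<le> max (nat i + nat j) (nat (- i) + nat (- j))"
    using gdist_le_rep_cost[OF rep] by simp
qed

lemma Lambda_triple:
  assumes "A \<noteq> B" "A \<noteq> C" "B \<noteq> C"
  shows "Lambda {A, B, C} = affine_lattice3 A B C"
proof
  have "A = comb3 1 0 0 A B C" "B = comb3 0 1 0 A B C" "C = comb3 0 0 1 A B C"
    by (simp_all add: comb3_def)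
  then have "{A, B, C} \<subseteq> affine_lattice3 A B C"
    unfolding affine_lattice3_def by force
  then show "Lambda {A, B, C} \<subseteq> affine_lattice3 A B C"
    by (rule Lambda_subset_affine_lattice3)
  show "affine_lattice3 A B C \<subseteq> Lambda {A, B, C}"
    unfolding affine_lattice3_def
    using Lambda_two_point[of A "{A, B, C}" B C] assms by (auto simp: comb3_eq_base_plus)
qed

lemma nonneg_pts_add: "x \<in> nonneg_pts \<Longrightarrow> y \<in> nonneg_pts \<Longrightarrow> x + y \<in> nonneg_pts"
  by (simp add: nonneg_pts_def)

lemma nonneg_pts_scale: "0 \<le> k \<Longrightarrow> x \<in> nonneg_pts \<Longrightarrow> of_int k * x \<in> nonneg_pts"
  by (simp add: nonneg_pts_def)

lemma nonneg_pts_scale_cancel: "0 < k \<Longrightarrow> of_int k * x \<in> nonneg_pts \<Longrightarrow> x \<in> nonneg_pts"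
  by (simp add: nonneg_pts_def zero_le_mult_iff)

lemma self_is_rep: "g \<in> G \<Longrightarrow> is_rep G g g (\<lambda>_. 0)"
  by (simp add: is_rep_def)

lemma subset_Lambda: "G \<subseteq> Lambda G"
  unfolding Lambda_def using self_is_rep by blast

lemma subset_E: "G \<subseteq> nonneg_pts \<Longrightarrow> G \<subseteq> E n G"
proof
  fix g assume "G \<subseteq> nonneg_pts" "g \<in> G"
  moreover have "gdist G g = 0"
    using gdist_le_rep_cost[OF self_is_rep[OF \<open>g \<in> G\<close>]] by (simp add: rep_cost_def)
  ultimately show "g \<in> E n G"
    unfolding E_def using subset_Lambda by auto
qed

lemma E_subset_Lambda: "E n G \<subseteq> Lambda G"
  by (auto simp: E_def)

lemma E_iter_subset_nonneg: "T \<subseteq> nonneg_pts \<Longrightarrow> (E n ^^ k) T \<subseteq> nonneg_pts"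
  by (induction k) (auto simp: E_def)

lemma E_iter_mono:
  assumes "T \<subseteq> nonneg_pts" "k \<le> l"
  shows "(E n ^^ k) T \<subseteq> (E n ^^ l) T"
proof (rule lift_Suc_mono_le[of "\<lambda>k. (E n ^^ k) T", OF _ assms(2)])
  show "(E n ^^ i) T \<subseteq> (E n ^^ Suc i) T" for i
    using subset_E[OF E_iter_subset_nonneg[OF assms(1)]] by simp
qed

lemma E_completion_subset_nonneg: "T \<subseteq> nonneg_pts \<Longrightarrow> E_completion n T \<subseteq> nonneg_pts"
  unfolding E_completion_def using E_iter_subset_nonneg by blast

lemma subset_E_completion: "T \<subseteq> nonneg_pts \<Longrightarrow> T \<subseteq> E_completion n T"
  unfolding E_completion_def using subset_E[of T n] by (auto intro!: UN_I[of 1])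

lemma E_completion_subset_affine_lattice3:
  assumes "T \<subseteq> affine_lattice3 A B C"
  shows "E_completion n T \<subseteq> affine_lattice3 A B C"
proof -
  have "(E n ^^ k) T \<subseteq> affine_lattice3 A B C" for k
  proof (induction k)
    case (Suc k)
    then have "Lambda ((E n ^^ k) T) \<subseteq> affine_lattice3 A B C"
      by (rule Lambda_subset_affine_lattice3)
    then show ?case
      using E_subset_Lambda[of n "(E n ^^ k) T"] by auto
  qed (use assms in simp)
  then show ?thesis
    unfolding E_completion_def by blast
qed

lemma finite_subset_E_completion:
  assumes "T \<subseteq> nonneg_pts" "finite F" "F \<subseteq> E_completion n T"
  obtains k where "F \<subseteq> (E n ^^ k) T"
proof -
  have "\<exists>k. F \<subseteq> (E n ^^ k) T"
    using assms(2,3)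
  proof (induction F rule: finite_induct)
    case (insert x F)
    then obtain k l where "F \<subseteq> (E n ^^ k) T" "x \<in> (E n ^^ l) T"
      unfolding E_completion_def by blast
    then have "insert x F \<subseteq> (E n ^^ max k l) T"
      using E_iter_mono[OF assms(1), of k "max k l" n] E_iter_mono[OF assms(1), of l "max k l" n] by auto
    then show ?case ..
  qed simp
  then show ?thesis
    using that by blast
qed

lemma comb3_in_E_completion:
  assumes "T \<subseteq> nonneg_pts" "{A, B, C} \<subseteq> E_completion n T" "A \<noteq> B" "A \<noteq> C" "B \<noteq> C"
    and "a + b + c = 1" "comb3 a b c A B C \<in> nonneg_pts"
    and "nat b + nat c \<le> n" "nat (- b) + nat (- c) \<le> n"
  shows "comb3 a b c A B C \<in> E_completion n T"
proof -
  obtain k where k: "{A, B, C} \<subseteq> (E n ^^ k) T"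
    using finite_subset_E_completion[OF assms(1) _ assms(2)] by blast
  let ?G = "(E n ^^ k) T" and ?x = "A + of_int b * (B - A) + of_int c * (C - A)"
  have "?x \<in> Lambda ?G"
    by (rule Lambda_two_point) (use k assms(3-5) in auto)
  moreover have "gdist ?G ?x \<le> max (nat b + nat c) (nat (- b) + nat (- c))"
    by (rule gdist_two_point) (use k assms(3-5) in auto)
  ultimately have "?x \<in> E n ?G"
    using assms(7-9) unfolding E_def comb3_eq_base_plus[OF assms(6)] by auto
  then have "comb3 a b c A B C \<in> E n ?G"
    unfolding comb3_eq_base_plus[OF assms(6)] .
  then show ?thesis
    unfolding E_completion_def by (intro UN_I[of "Suc k"]) auto
qed

section \<open>Descent on the weight of a representation\<close>

definition triple_rep :: "(int ^ 'n) set \<Rightarrow> int ^ 'n \<Rightarrow> int \<Rightarrow> bool" where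
  "triple_rep K x w \<longleftrightarrow> (\<exists>A B C a b c. {A, B, C} \<subseteq> K \<and> int_affine_indep3 A B C \<and>
     a + b + c = 1 \<and> x = comb3 a b c A B C \<and> w = \<bar>a\<bar> + \<bar>b\<bar> + \<bar>c\<bar>)"

lemma triple_repI:
  "{A, B, C} \<subseteq> K \<Longrightarrow> int_affine_indep3 A B C \<Longrightarrow> a + b + c = 1
    \<Longrightarrow> triple_rep K (comb3 a b c A B C) (\<bar>a\<bar> + \<bar>b\<bar> + \<bar>c\<bar>)"
  unfolding triple_rep_def by blast

lemma triple_rep_replace_first:
  assumes "{A, B, C} \<subseteq> K" "comb3 (- 1) q r A B C \<in> K" "int_affine_indep3 A B C"
    and "q + r = 2" "a + b + c = 1"
  shows "triple_rep K (comb3 a b c A B C) (\<bar>a\<bar> + \<bar>b + a * q\<bar> + \<bar>c + a * r\<bar>)"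
proof -
  have "- a + (b + a * q) + (c + a * r) = 1"
    using assms(4,5) by (simp add: algebra_simps flip: distrib_left)
  moreover have "int_affine_indep3 (comb3 (- 1) q r A B C) B C"
    using assms(3,4) by (rule int_affine_indep3_replace_first)
  ultimately have "triple_rep K (comb3 (- a) (b + a * q) (c + a * r) (comb3 (- 1) q r A B C) B C)
                    (\<bar>- a\<bar> + \<bar>b + a * q\<bar> + \<bar>c + a * r\<bar>)"
    using assms(1,2) by (intro triple_repI) auto
  then show ?thesis
    by (simp flip: comb3_replace_first)
qed

context
  fixes T :: "(int ^ 'n) set" and n :: nat
  assumes T_nonneg: "T \<subseteq> nonneg_pts" and two_le_n: "2 \<le> n"
begin

lemma triple_rep_decrease_two_pos:
  assumes "{A, B, C} \<subseteq> E_completion n T" "int_affine_indep3 A B C" "a + b + c = 1"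
    and x: "comb3 a b c A B C \<in> nonneg_pts" and "1 \<le> b" "1 \<le> c"
  shows "\<exists>w < \<bar>a\<bar> + \<bar>b\<bar> + \<bar>c\<bar>. triple_rep (E_completion n T) (comb3 a b c A B C) w"
proof -
  define D where "D = comb3 (- 1) 1 1 A B C"
  have a: "a = 1 - b - c" using assms(3) by simp
  have scaled: "of_int (b + c - 1) * D = comb3 a b c A B C + of_int (c - 1) * B + of_int (b - 1) * C"
    unfolding D_def vec_eq_iff a by (simp add: comb3_nth algebra_simps)
  have "{A, B, C} \<subseteq> nonneg_pts"
    using assms(1) E_completion_subset_nonneg[OF T_nonneg] by blast
  then have "comb3 a b c A B C + of_int (c - 1) * B + of_int (b - 1) * C \<in> nonneg_pts"
    using assms(5,6) x by (intro nonneg_pts_add nonneg_pts_scale) auto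
  then have "D \<in> nonneg_pts"
    unfolding scaled[symmetric] by (rule nonneg_pts_scale_cancel[rotated]) (use assms(5,6) in simp)
  then have "D \<in> E_completion n T"
    unfolding D_def using assms(1) int_affine_indep3_distinct[OF assms(2)] two_le_n
    by (intro comb3_in_E_completion[OF T_nonneg]) auto
  then have "triple_rep (E_completion n T) (comb3 a b c A B C) (\<bar>a\<bar> + \<bar>b + a * 1\<bar> + \<bar>c + a * 1\<bar>)"
    unfolding D_def using assms(1-3) by (intro triple_rep_replace_first) auto
  moreover have "\<bar>a\<bar> + \<bar>b + a * 1\<bar> + \<bar>c + a * 1\<bar> < \<bar>a\<bar> + \<bar>b\<bar> + \<bar>c\<bar>"
    using assms(5,6) a by simp
  ultimately show ?thesis by blast
qed

lemma triple_rep_decrease_lt: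
  assumes "{A, B, C} \<subseteq> E_completion n T" "int_affine_indep3 A B C" "a + b + c = 1"
    and x: "comb3 a b c A B C \<in> nonneg_pts" and "a < c" "c \<le> 0"
  shows "\<exists>w < \<bar>a\<bar> + \<bar>b\<bar> + \<bar>c\<bar>. triple_rep (E_completion n T) (comb3 a b c A B C) w"
proof -
  define D where "D = comb3 (- 1) 2 0 A B C"
  have b: "b = 1 - a - c" using assms(3) by simp
  have scaled: "of_int (- a) * D = comb3 a b c A B C + of_int (c - a - 1) * B + of_int (- c) * C"
    unfolding D_def vec_eq_iff b by (simp add: comb3_nth algebra_simps)
  have "{A, B, C} \<subseteq> nonneg_pts"
    using assms(1) E_completion_subset_nonneg[OF T_nonneg] by blast
  then have "comb3 a b c A B C + of_int (c - a - 1) * B + of_int (- c) * C \<in> nonneg_pts"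
    using assms(5,6) x by (intro nonneg_pts_add nonneg_pts_scale) auto
  then have "D \<in> nonneg_pts"
    unfolding scaled[symmetric] by (rule nonneg_pts_scale_cancel[rotated]) (use assms(5,6) in simp)
  then have "D \<in> E_completion n T"
    unfolding D_def using assms(1) int_affine_indep3_distinct[OF assms(2)] two_le_n
    by (intro comb3_in_E_completion[OF T_nonneg]) auto
  then have "triple_rep (E_completion n T) (comb3 a b c A B C) (\<bar>a\<bar> + \<bar>b + a * 2\<bar> + \<bar>c + a * 0\<bar>)"
    unfolding D_def using assms(1-3) by (intro triple_rep_replace_first) auto
  moreover have "\<bar>a\<bar> + \<bar>b + a * 2\<bar> + \<bar>c + a * 0\<bar> < \<bar>a\<bar> + \<bar>b\<bar> + \<bar>c\<bar>"
    using assms(5,6) b by simp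
  ultimately show ?thesis by blast
qed

lemma triple_rep_decrease_eq:
  assumes "{A, B, C} \<subseteq> E_completion n T" "int_affine_indep3 A B C" "a + b + c = 1"
    and x: "comb3 a b c A B C \<in> nonneg_pts" and "a = c" "c < 0"
  shows "\<exists>w < \<bar>a\<bar> + \<bar>b\<bar> + \<bar>c\<bar>. triple_rep (E_completion n T) (comb3 a b c A B C) w"
proof -
  \<comment> \<open>D replaces C; as a step it is taken from B, where its cost is 2.\<close>
  define D where "D = comb3 (- 1) 3 (- 1) C B A"
  have b: "b = 1 - 2 * c" and a: "a = c" using assms(3,5) by simp_all
  have scaled: "of_int (- c) * D = comb3 a b c A B C + of_int (- c - 1) * B"
    unfolding D_def vec_eq_iff b a by (simp add: comb3_nth algebra_simps)
  have "{A, B, C} \<subseteq> nonneg_pts"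
    using assms(1) E_completion_subset_nonneg[OF T_nonneg] by blast
  then have "comb3 a b c A B C + of_int (- c - 1) * B \<in> nonneg_pts"
    using assms(6) x by (intro nonneg_pts_add nonneg_pts_scale) auto
  then have "D \<in> nonneg_pts"
    unfolding scaled[symmetric] by (rule nonneg_pts_scale_cancel[rotated]) (use assms(6) in simp)
  moreover have "D = comb3 3 (- 1) (- 1) B A C"
    unfolding D_def by (simp add: comb3_def algebra_simps)
  ultimately have "D \<in> E_completion n T"
    using assms(1) int_affine_indep3_distinct[OF assms(2)] two_le_n
    by (auto intro!: comb3_in_E_completion[OF T_nonneg])
  then have "triple_rep (E_completion n T) (comb3 c b a C B A) (\<bar>c\<bar> + \<bar>b + c * 3\<bar> + \<bar>a + c * (- 1)\<bar>)"
    unfolding D_def using assms(1-3) int_affine_indep3_swap13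
    by (intro triple_rep_replace_first) auto
  moreover have "\<bar>c\<bar> + \<bar>b + c * 3\<bar> + \<bar>a + c * (- 1)\<bar> < \<bar>a\<bar> + \<bar>b\<bar> + \<bar>c\<bar>"
    using assms(6) a b by simp
  ultimately show ?thesis
    by (metis comb3_swap13)
qed

lemma triple_rep_decrease_mid_pos:
  assumes "{A, B, C} \<subseteq> E_completion n T" "int_affine_indep3 A B C" "a + b + c = 1"
    and x: "comb3 a b c A B C \<in> nonneg_pts" and "1 \<le> b" "a < 0 \<or> c < 0"
  shows "\<exists>w < \<bar>a\<bar> + \<bar>b\<bar> + \<bar>c\<bar>. triple_rep (E_completion n T) (comb3 a b c A B C) w"
proof -
  have sym: "\<bar>c\<bar> + \<bar>b\<bar> + \<bar>a\<bar> = \<bar>a\<bar> + \<bar>b\<bar> + \<bar>c\<bar>" "comb3 c b a C B A = comb3 a b c A B C"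
    using comb3_swap13 by simp_all
  have swapped: "{C, B, A} \<subseteq> E_completion n T" "int_affine_indep3 C B A" "c + b + a = 1"
      "comb3 c b a C B A \<in> nonneg_pts"
    using assms(1-3) x int_affine_indep3_swap13 unfolding sym by auto
  consider "1 \<le> c" | "1 \<le> a" | "a < c" "c \<le> 0" | "c < a" "a \<le> 0" | "a = c" "c < 0"
    using assms(6) by linarith
  then show ?thesis
  proof cases
    case 1
    then show ?thesis using triple_rep_decrease_two_pos assms by blast
  next
    case 2
    then show ?thesis using triple_rep_decrease_two_pos[OF swapped] assms(5) unfolding sym by blast
  next
    case 3
    then show ?thesis using triple_rep_decrease_lt assms by blast
  next
    case 4
    then show ?thesis using triple_rep_decrease_lt[OF swapped] unfolding sym by blast
  next
    case 5
    then show ?thesis using triple_rep_decrease_eq assms by blast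
  qed
qed

lemma nonneg_triple_rep_decrease:
  assumes "triple_rep (E_completion n T) x w" "x \<in> nonneg_pts"
  shows "x \<in> E_completion n T \<or> (\<exists>w' < w. triple_rep (E_completion n T) x w')"
proof -
  obtain A B C a b c where K: "{A, B, C} \<subseteq> E_completion n T" and indep: "int_affine_indep3 A B C"
    and sum: "a + b + c = 1" and x: "x = comb3 a b c A B C" and w: "w = \<bar>a\<bar> + \<bar>b\<bar> + \<bar>c\<bar>"
    using assms(1) unfolding triple_rep_def by blast
  consider "0 \<le> a" "0 \<le> b" "0 \<le> c" | "1 \<le> b" "a < 0 \<or> c < 0" | "1 \<le> a" "b < 0 \<or> c < 0"
    | "1 \<le> c" "a < 0 \<or> b < 0"
    using sum by linarith
  then show ?thesis
  proof cases
    case 1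
    then consider "a = 1" "b = 0" "c = 0" | "a = 0" "b = 1" "c = 0" | "a = 0" "b = 0" "c = 1"
      using sum by linarith
    then have "x \<in> {A, B, C}"
      by cases (simp_all add: x comb3_def)
    then show ?thesis using K by blast
  next
    case 2
    then show ?thesis
      using triple_rep_decrease_mid_pos[OF K indep sum] assms(2) unfolding x w by blast
  next
    case 3
    then show ?thesis
      using triple_rep_decrease_mid_pos[of B A C b a c] K indep sum assms(2)
      unfolding x w by (auto simp: insert_commute int_affine_indep3_swap12 algebra_simps comb3_swap12[of a])
  next
    case 4
    then show ?thesis
      using triple_rep_decrease_mid_pos[of A C B a c b] K indep sum assms(2)
      unfolding x w by (auto simp: insert_commute int_affine_indep3_swap23 algebra_simps comb3_swap23[of a])
  qed
qed

lemma nonneg_triple_rep_in_E_completion: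
  assumes "triple_rep (E_completion n T) x w" "x \<in> nonneg_pts"
  shows "x \<in> E_completion n T"
  using assms
proof (induction "nat w" arbitrary: w rule: less_induct)
  case less
  have "0 \<le> w'" if "triple_rep (E_completion n T) x w'" for w'
    using that unfolding triple_rep_def by auto
  then show ?case
    using nonneg_triple_rep_decrease[OF less.prems] less.hyps less.prems(2)
    by (metis nat_less_eq_zless)
qed

end

lemma E_completion_triple:
  assumes "{A, B, C} \<subseteq> nonneg_pts" "int_affine_indep3 A B C" "2 \<le> n"
  shows "E_completion n {A, B, C} = Lambda {A, B, C} \<inter> nonneg_pts"
proof
  have lattice: "Lambda {A, B, C} = affine_lattice3 A B C"
    using int_affine_indep3_distinct[OF assms(2)] by (rule Lambda_triple)
  show "E_completion n {A, B, C} \<subseteq> Lambda {A, B, C} \<inter> nonneg_pts"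
    using E_completion_subset_affine_lattice3[of "{A, B, C}"] subset_Lambda[of "{A, B, C}"]
      E_completion_subset_nonneg[OF assms(1)]
    unfolding lattice by blast
  show "Lambda {A, B, C} \<inter> nonneg_pts \<subseteq> E_completion n {A, B, C}"
  proof
    fix x assume x: "x \<in> Lambda {A, B, C} \<inter> nonneg_pts"
    then obtain a b c where "a + b + c = 1" "x = comb3 a b c A B C"
      unfolding lattice affine_lattice3_def by blast
    then have "triple_rep (E_completion n {A, B, C}) x (\<bar>a\<bar> + \<bar>b\<bar> + \<bar>c\<bar>)"
      using subset_E_completion[OF assms(1)] assms(2) by (auto intro: triple_repI)
    then show "x \<in> E_completion n {A, B, C}"
      using nonneg_triple_rep_in_E_completion[OF assms(1,3)] x by blast
  qed
qed

theorem lemma3p4: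
  fixes T :: "(int ^ 'n) set"
  assumes "CARD('n) \<ge> 3"
    and "T \<subseteq> nonneg_pts"
    and "card T = 3"
    and "\<not> affine_dependent (to_real_vec ` T)"
  shows "E_completion 2 T = Lambda T \<inter> nonneg_pts"
proof -
  obtain A B C where T: "T = {A, B, C}" and "A \<noteq> B" "A \<noteq> C" "B \<noteq> C"
    using assms(3) card_3_iff by metis
  then have "int_affine_indep3 A B C"
    using assms(4) by (intro int_affine_indep3_if_not_affine_dependent) auto
  then show ?thesis
    using E_completion_triple[of A B C 2] assms(2) unfolding T by simp
qed

end
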